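(* Let $m\ge0$ be an integer and write $s_n=s_n^{(1,m+2)}$. Then for all $n\ge0$, \[ s_{n+m+2}^2-1=\sum_{k=0}^n\left\{s_k^2+2\sum_{i=0}^k P_{k+m+1-i}^{\{-2,-1,m\}}s_i^2\right\}. \]
   Context: For positive integers $p<q$, $s_n^{(p,q)}$ is defined by $s_n^{(p,q)}=\delta_{0,n}+s_{n-p}^{(p,q)}+s_{n-q}^{(p,q)}$ for $n\ge0$ and $s_n^{(p,q)}=0$ for $n<0$. $\delta_{i,j}$ is $1$ if $i=j$ and $0$ otherwise. For a finite set $W$ of integers, $P_n^W$ is the number of permutations $\pi$ of $\{1,\dots,n\}$ with $\pi(i)-i\in W$ for all $i$ (the permanent of the $n\times n$ $(0,1)$ Toeplitz matrix whose $(i,j)$ entry is $1$ iff $j-i\in W$), with $P_0^W=1$. *)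

theory Defs
  imports Main "HOL-Combinatorics.Permutations"
begin

text \<open>The guard 0 < p only serves termination; the paper assumes 0 < p < q.\<close>
function s_seq :: "nat \<Rightarrow> nat \<Rightarrow> nat \<Rightarrow> nat" where
  "s_seq p q n =
     (if n = 0 then 1 else 0)
     + (if 0 < p \<and> p \<le> n then s_seq p q (n - p) else 0)
     + (if 0 < q \<and> q \<le> n then s_seq p q (n - q) else 0)"
  by auto
termination by (relation "measure (\<lambda>(p,q,n). n)") auto

definition perm_count :: "int set \<Rightarrow> nat \<Rightarrow> nat" where
  "perm_count W n =
     card {\<pi>. \<pi> permutes {1..n} \<and> (\<forall>i\<in>{1..n}. int (\<pi> i) - int i \<in> W)}"

end

(*
  Since s(k+m+2) = s(k+m+1) + s(k), the left-hand side telescopes and the theorem reduces to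
  the convolution identity  sum_{i<=k} P(k+m+1-i) s(i)^2 = s(k) s(k+m+1).

  An admissible permutation of {1..j+m+1} (displacements -2, -1, m) is determined by its set of
  jumps, the positions of displacement m: on the other positions it is the increasing bijection
  onto the values that are not jump targets.  Counting arguments show that the jump sets are
  exactly the sets 1 = x_0 < ... < x_r = j+1 whose gaps are at most m+1 and in which any two
  consecutive gaps sum to at least m+2.  Classifying these sets by their last gap gives a
  recursion for their number that matches  s(n+d) = s(n) + sum_{m+2-d <= c <= m+1} s(n-c),
  and the convolution identity follows by induction on n.
*)
theory Submission
  imports Defs
begin

lemma s_seq_1_rec:
  assumes "0 < q" "0 < n"
  shows "s_seq 1 q n = s_seq 1 q (n - 1) + (if q \<le> n then s_seq 1 q (n - q) else 0)"
  using assms by (subst s_seq.simps) simp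

declare s_seq.simps [simp del]

lemma s_seq_1_below: "n < q \<Longrightarrow> s_seq 1 q n = 1"
proof (induction n)
  case 0
  then show ?case by (subst s_seq.simps) simp
next
  case (Suc n)
  then show ?case using s_seq_1_rec[of q "Suc n"] by simp
qed

lemma s_seq_1_add:
  assumes "d < q"
  shows "s_seq 1 q (n + d) = s_seq 1 q n + (\<Sum>c\<in>{q-d..<q}. if c \<le> n then s_seq 1 q (n - c) else 0)"
  using assms
proof (induction d)
  case 0
  then show ?case by simp
next
  case (Suc d)
  have "{q - Suc d..<q} = insert (q - Suc d) {q-d..<q}"
    using Suc.prems by auto
  moreover have "s_seq 1 q (n + Suc d)
      = s_seq 1 q (n + d) + (if q - Suc d \<le> n then s_seq 1 q (n - (q - Suc d)) else 0)"
    using Suc.prems s_seq_1_rec[of q "n + Suc d"] by (auto intro!: arg_cong[where f = "s_seq 1 q"])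
  ultimately show ?case
    using Suc by simp
qed

text \<open>A jump set with top element j+1 encodes the composition of j into its consecutive gaps:
  the gaps are at most m+1, and two consecutive gaps sum to at least m+2.\<close>

definition jump_set :: "nat \<Rightarrow> nat \<Rightarrow> nat set \<Rightarrow> bool" where
  "jump_set m j S \<longleftrightarrow> S \<subseteq> {1..j+1} \<and> 1 \<in> S \<and> j+1 \<in> S
     \<and> (\<forall>x\<in>S. x \<le> j \<longrightarrow> (\<exists>y\<in>S. x < y \<and> y \<le> x+m+1))
     \<and> (\<forall>x\<in>S. \<forall>y\<in>S. \<forall>z\<in>S. x < y \<longrightarrow> y < z \<longrightarrow> x+m+2 \<le> z)"

text \<open>The parameter t is a lower bound for the last gap; removing the top element of a set whose
  last gap is c leaves a set whose last gap is at least m+2-c.\<close>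

definition jump_sets :: "nat \<Rightarrow> nat \<Rightarrow> nat \<Rightarrow> nat set set" where
  "jump_sets m j t = {S. jump_set m j S \<and> (\<forall>y\<in>S. y \<le> j \<longrightarrow> y + t \<le> j+1)}"

definition jump_sets_last_gap :: "nat \<Rightarrow> nat \<Rightarrow> nat \<Rightarrow> nat \<Rightarrow> nat set set" where
  "jump_sets_last_gap m j t c =
     {S \<in> jump_sets m j t. j+1-c \<in> S \<and> (\<forall>y\<in>S. y \<le> j \<longrightarrow> y \<le> j+1-c)}"

lemma finite_jump_sets: "finite (jump_sets m j t)"
  by (rule finite_subset[of _ "Pow {1..j+1}"]) (auto simp: jump_sets_def jump_set_def)

lemma jump_sets_0: "jump_sets m 0 t = {{1}}"
  by (auto simp: jump_sets_def jump_set_def)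

lemma jump_sets_1: "jump_sets m j 1 = {S. jump_set m j S}"
  by (auto simp: jump_sets_def)

lemma jump_sets_UN_last_gap:
  assumes "1 \<le> j" "1 \<le> t"
  shows "jump_sets m j t = (\<Union>c\<in>{t..min (m+1) j}. jump_sets_last_gap m j t c)"
proof
  show "jump_sets m j t \<subseteq> (\<Union>c\<in>{t..min (m+1) j}. jump_sets_last_gap m j t c)"
  proof
    fix S assume S: "S \<in> jump_sets m j t"
    then have sub: "S \<subseteq> {1..j+1}" and "1 \<in> S"
      and gap: "\<forall>x\<in>S. x \<le> j \<longrightarrow> (\<exists>y\<in>S. x < y \<and> y \<le> x+m+1)"
      and last: "\<forall>y\<in>S. y \<le> j \<longrightarrow> y + t \<le> j+1"
      by (auto simp: jump_sets_def jump_set_def)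
    define p where "p = Max (S - {j+1})"
    have fin: "finite (S - {j+1})"
      using sub by (simp add: finite_subset)
    have "1 \<in> S - {j+1}"
      using \<open>1 \<in> S\<close> assms by simp
    then have p: "p \<in> S" "p \<le> j" and p_max: "\<And>y. y \<in> S \<Longrightarrow> y \<le> j \<Longrightarrow> y \<le> p"
      using fin sub Max_in[OF fin] Max_ge[OF fin] unfolding p_def by fastforce+
    obtain y where y: "y \<in> S" "p < y" "y \<le> p+m+1"
      using gap p by blast
    have "y = j+1"
      using y p_max sub by fastforce
    then have "S \<in> jump_sets_last_gap m j t (j+1-p)"
      using S p p_max by (auto simp: jump_sets_last_gap_def)
    moreover have "j+1-p \<in> {t..min (m+1) j}"
      using last p y \<open>y = j+1\<close> p_max[of 1] \<open>1 \<in> S\<close> assms by auto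
    ultimately show "S \<in> (\<Union>c\<in>{t..min (m+1) j}. jump_sets_last_gap m j t c)"
      by blast
  qed
qed (auto simp: jump_sets_last_gap_def)

lemma jump_sets_last_gap_disjoint:
  assumes "1 \<le> c" "c \<le> j" "1 \<le> c'" "c' \<le> j" "c \<noteq> c'"
  shows "jump_sets_last_gap m j t c \<inter> jump_sets_last_gap m j t c' = {}"
proof -
  have "j+1-c \<le> j+1-c'" "j+1-c' \<le> j+1-c"
    if "S \<in> jump_sets_last_gap m j t c" "S \<in> jump_sets_last_gap m j t c'" for S
    using that assms by (auto simp: jump_sets_last_gap_def)
  then show ?thesis
    using assms by fastforce
qed

lemma jump_set_insert:
  assumes S: "jump_set m i S" and k: "i+1 < k" "k \<le> i+m+2"
    and far: "\<forall>y\<in>S. y \<le> i \<longrightarrow> y+m+2 \<le> k"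
  shows "jump_set m (k-1) (insert k S)"
proof -
  have sub: "S \<subseteq> {1..i+1}" and "1 \<in> S"
    and gap: "\<forall>x\<in>S. x \<le> i \<longrightarrow> (\<exists>y\<in>S. x < y \<and> y \<le> x+m+1)"
    and spread: "\<forall>x\<in>S. \<forall>y\<in>S. \<forall>z\<in>S. x < y \<longrightarrow> y < z \<longrightarrow> x+m+2 \<le> z"
    using S by (auto simp: jump_set_def)
  have "\<exists>y\<in>insert k S. x < y \<and> y \<le> x+m+1" if x: "x \<in> S" for x
  proof (cases "x \<le> i")
    case True
    then show ?thesis
      using gap x by auto
  next
    case False
    then have "x = i+1"
      using sub x by fastforce
    then show ?thesis
      using k by auto
  qed
  moreover have "x+m+2 \<le> z"
    if xyz: "x \<in> S" "y \<in> S" "z \<in> insert k S" "x < y" "y < z" for x y z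
  proof (cases "z = k")
    case True
    have "x \<le> i"
      using xyz sub by fastforce
    then show ?thesis
      using far xyz True by auto
  qed (use spread xyz in auto)
  moreover have "insert k S \<subseteq> {1..k}"
    using sub k by fastforce
  ultimately show ?thesis
    using \<open>1 \<in> S\<close> k unfolding jump_set_def by fastforce
qed

lemma jump_set_Diff_max:
  assumes S: "jump_set m j S" and p: "p \<in> S" "p \<le> j" "\<forall>y\<in>S. y \<le> j \<longrightarrow> y \<le> p"
  shows "jump_set m (p-1) (S - {j+1})"
proof -
  have sub: "S \<subseteq> {1..j+1}" and "1 \<in> S"
    and gap: "\<forall>x\<in>S. x \<le> j \<longrightarrow> (\<exists>y\<in>S. x < y \<and> y \<le> x+m+1)"
    and spread: "\<forall>x\<in>S. \<forall>y\<in>S. \<forall>z\<in>S. x < y \<longrightarrow> y < z \<longrightarrow> x+m+2 \<le> z"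
    using S by (auto simp: jump_set_def)
  have "1 \<le> p"
    using sub p(1) by auto
  have "S - {j+1} \<subseteq> {1..p}"
  proof
    fix x assume "x \<in> S - {j+1}"
    then have "x \<in> S" "1 \<le> x" "x \<le> j"
      using sub by fastforce+
    then show "x \<in> {1..p}"
      using p by auto
  qed
  moreover have "\<exists>y\<in>S - {j+1}. x < y \<and> y \<le> x+m+1" if x: "x \<in> S - {j+1}" "x < p" for x
  proof -
    have "x \<in> S" "x \<le> j"
      using x p by auto
    then obtain y where y: "y \<in> S" "x < y" "y \<le> x+m+1"
      using gap by blast
    show ?thesis
    proof (cases "y = j+1")
      case True
      then show ?thesis
        using y x p by (intro bexI[of _ p]) auto
    qed (use y in auto)
  qed
  ultimately show ?thesis
    using \<open>1 \<in> S\<close> \<open>1 \<le> p\<close> p spread unfolding jump_set_def by auto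
qed

lemma insert_jump_sets_last_gap:
  assumes c: "t \<le> c" "1 \<le> c" "c \<le> m+1" "c \<le> j" and S: "S \<in> jump_sets m (j-c) (m+2-c)"
  shows "insert (j+1) S \<in> jump_sets_last_gap m j t c"
proof -
  have "jump_set m (j-c) S" and far: "\<forall>y\<in>S. y \<le> j-c \<longrightarrow> y+m+2 \<le> j+1"
    using S c by (auto simp: jump_sets_def)
  then have "jump_set m j (insert (j+1) S)"
    using jump_set_insert[of m "j-c" S "j+1"] c by simp
  moreover have "S \<subseteq> {1..j+1-c}" "j+1-c \<in> S"
    using \<open>jump_set m (j-c) S\<close> c by (auto simp: jump_set_def Suc_diff_le)
  ultimately show ?thesis
    using c by (fastforce simp: jump_sets_last_gap_def jump_sets_def)
qed

lemma Diff_jump_sets_last_gap: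
  assumes c: "1 \<le> c" "c \<le> j" and S: "S \<in> jump_sets_last_gap m j t c"
  shows "S - {j+1} \<in> jump_sets m (j-c) (m+2-c)"
proof -
  let ?p = "j+1-c"
  have "jump_set m j S" "?p \<in> S" "j+1 \<in> S" and p_max: "\<forall>y\<in>S. y \<le> j \<longrightarrow> y \<le> ?p"
    using S by (auto simp: jump_sets_last_gap_def jump_sets_def jump_set_def)
  then have "jump_set m (j-c) (S - {j+1})"
    using jump_set_Diff_max[of m j S ?p] c by simp
  moreover have "y + (m+2-c) \<le> j-c+1" if y: "y \<in> S - {j+1}" "y \<le> j-c" for y
  proof -
    have "y < ?p" "?p < j+1"
      using y c by auto
    then have "y+m+2 \<le> j+1"
      using \<open>jump_set m j S\<close> y \<open>?p \<in> S\<close> \<open>j+1 \<in> S\<close> unfolding jump_set_def by blast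
    then show ?thesis
      using c y(2) by arith
  qed
  ultimately show ?thesis
    by (simp add: jump_sets_def)
qed

lemma bij_betw_insert_jump_sets_last_gap:
  assumes "t \<le> c" "c \<le> m+1" "1 \<le> c" "c \<le> j"
  shows "bij_betw (insert (j+1)) (jump_sets m (j-c) (m+2-c)) (jump_sets_last_gap m j t c)"
proof (rule bij_betw_byWitness[where f' = "\<lambda>S. S - {j+1}"])
  show "\<forall>S\<in>jump_sets m (j-c) (m+2-c). insert (j+1) S - {j+1} = S"
    using assms by (fastforce simp: jump_sets_def jump_set_def)
  show "\<forall>S\<in>jump_sets_last_gap m j t c. insert (j+1) (S - {j+1}) = S"
    by (auto simp: jump_sets_last_gap_def jump_sets_def jump_set_def)
qed (use assms insert_jump_sets_last_gap Diff_jump_sets_last_gap in auto)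

lemma card_jump_sets_rec:
  assumes "1 \<le> j" "1 \<le> t"
  shows "card (jump_sets m j t)
    = (\<Sum>c\<in>{t..m+1}. if c \<le> j then card (jump_sets m (j-c) (m+2-c)) else 0)"
proof -
  have "card (jump_sets m j t) = (\<Sum>c\<in>{t..min (m+1) j}. card (jump_sets_last_gap m j t c))"
    unfolding jump_sets_UN_last_gap[OF assms]
  proof (rule card_UN_disjoint)
    show "\<forall>c\<in>{t..min (m+1) j}. finite (jump_sets_last_gap m j t c)"
      using finite_jump_sets by (auto simp: jump_sets_last_gap_def)
  qed (use assms jump_sets_last_gap_disjoint in auto)
  also have "\<dots> = (\<Sum>c\<in>{t..min (m+1) j}. card (jump_sets m (j-c) (m+2-c)))"
  proof (rule sum.cong)
    fix c assume "c \<in> {t..min (m+1) j}"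
    then show "card (jump_sets_last_gap m j t c) = card (jump_sets m (j-c) (m+2-c))"
      using assms bij_betw_same_card[OF bij_betw_insert_jump_sets_last_gap, of t c m j] by simp
  qed simp
  also have "\<dots> = (\<Sum>c\<in>{t..m+1}. if c \<le> j then card (jump_sets m (j-c) (m+2-c)) else 0)"
    by (intro sum.mono_neutral_cong_left) auto
  finally show ?thesis .
qed

lemma jump_sets_sum_rec:
  assumes "1 \<le> t"
  shows "(\<Sum>j=1..n. card (jump_sets m j t) * f (n-j))
    = (\<Sum>c=t..m+1. if c \<le> n then (\<Sum>i=0..n-c. card (jump_sets m i (m+2-c)) * f (n-c-i)) else 0)"
proof -
  let ?J = "\<lambda>j t. card (jump_sets m j t)"
  have "(\<Sum>j=1..n. ?J j t * f (n-j))
      = (\<Sum>j=1..n. \<Sum>c=t..m+1. if c \<le> j then ?J (j-c) (m+2-c) * f (n-j) else 0)"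
  proof (rule sum.cong[OF refl])
    fix j assume "j \<in> {1..n}"
    then show "?J j t * f (n-j) = (\<Sum>c=t..m+1. if c \<le> j then ?J (j-c) (m+2-c) * f (n-j) else 0)"
      using assms
      by (subst card_jump_sets_rec) (auto simp: sum_distrib_right simp del: sum.cl_ivl_Suc intro!: sum.cong)
  qed
  also have "\<dots> = (\<Sum>c=t..m+1. \<Sum>j=1..n. if c \<le> j then ?J (j-c) (m+2-c) * f (n-j) else 0)"
    by (rule sum.swap)
  also have "\<dots> = (\<Sum>c=t..m+1. if c \<le> n then (\<Sum>i=0..n-c. ?J i (m+2-c) * f (n-c-i)) else 0)"
  proof (rule sum.cong[OF refl])
    fix c assume c: "c \<in> {t..m+1}"
    show "(\<Sum>j=1..n. if c \<le> j then ?J (j-c) (m+2-c) * f (n-j) else 0)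
        = (if c \<le> n then (\<Sum>i=0..n-c. ?J i (m+2-c) * f (n-c-i)) else 0)"
    proof (cases "c \<le> n")
      case True
      have "(\<Sum>j=1..n. if c \<le> j then ?J (j-c) (m+2-c) * f (n-j) else 0)
          = (\<Sum>j=c..n. ?J (j-c) (m+2-c) * f (n-j))"
        using c assms by (intro sum.mono_neutral_cong_right) auto
      also have "\<dots> = (\<Sum>i=0..n-c. ?J i (m+2-c) * f (n-c-i))"
        using True by (intro sum.reindex_bij_witness[where i = "\<lambda>i. i + c" and j = "\<lambda>j. j - c"]) auto
      finally show ?thesis
        using True by simp
    qed simp
  qed
  finally show ?thesis .
qed

lemma jump_sets_convolution:
  assumes "1 \<le> t" "t \<le> m+2"
  shows "(\<Sum>j=0..n. card (jump_sets m j t) * s_seq 1 (m+2) (n-j)^2)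
    = s_seq 1 (m+2) n * s_seq 1 (m+2) (n + (m+2-t))"
  using assms
proof (induction n arbitrary: t rule: less_induct)
  case (less n)
  let ?s = "s_seq 1 (m+2)"
  have IH: "(\<Sum>i=0..n-c. card (jump_sets m i (m+2-c)) * ?s (n-c-i)^2) = ?s (n-c) * ?s n"
    if "c \<in> {t..m+1}" "c \<le> n" for c
  proof -
    have "n - c < n" "1 \<le> m+2-c" "m+2-c \<le> m+2"
      using that less.prems by auto
    then show ?thesis
      using less.IH[of "n-c" "m+2-c"] that by simp
  qed
  have "(\<Sum>j=0..n. card (jump_sets m j t) * ?s (n-j)^2)
      = ?s n^2 + (\<Sum>j=1..n. card (jump_sets m j t) * ?s (n-j)^2)"
    by (simp add: sum.atLeast_Suc_atMost jump_sets_0)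
  also have "(\<Sum>j=1..n. card (jump_sets m j t) * ?s (n-j)^2)
      = (\<Sum>c=t..m+1. if c \<le> n then (\<Sum>i=0..n-c. card (jump_sets m i (m+2-c)) * ?s (n-c-i)^2) else 0)"
    using less.prems by (intro jump_sets_sum_rec) simp
  also have "\<dots> = (\<Sum>c=t..m+1. if c \<le> n then ?s (n-c) * ?s n else 0)"
    using IH by (intro sum.cong) auto
  also have "?s n^2 + \<dots> = ?s n * (?s n + (\<Sum>c=t..m+1. if c \<le> n then ?s (n-c) else 0))"
    by (auto simp: power2_eq_square distrib_left sum_distrib_left simp del: sum.cl_ivl_Suc
        intro!: sum.cong)
  also have "?s n + (\<Sum>c=t..m+1. if c \<le> n then ?s (n-c) else 0) = ?s (n + (m+2-t))"
    using s_seq_1_add[of "m+2-t" "m+2" n] less.prems by (simp add: atLeastLessThanSuc_atLeastAtMost)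
  finally show ?case .
qed

lemma strict_mono_on_bij_betw_eq:
  fixes f g :: "'a::wellorder \<Rightarrow> 'b::linorder"
  assumes "bij_betw f A B" "bij_betw g A B" "strict_mono_on A f" "strict_mono_on A g" "x \<in> A"
  shows "f x = g x"
  using assms(5)
proof (induction x rule: less_induct)
  case (less x)
  have not_less: "\<not> f' x < g' x"
    if f': "bij_betw f' A B" and g': "bij_betw g' A B" "strict_mono_on A g'"
      and below: "\<forall>y\<in>A. y < x \<longrightarrow> f' y = g' y" for f' g'
  proof
    assume lt: "f' x < g' x"
    obtain z where z: "z \<in> A" "g' z = f' x"
      using bij_betwE[OF f'] bij_betw_imp_surj_on[OF g'(1)] less.prems by (metis imageE)
    consider "z < x" | "z = x" | "x < z"
      by fastforce
    then show False
    proof cases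
      case 1
      then show False
        using below z less.prems bij_betw_imp_inj_on[OF f'] by (metis inj_onD order.irrefl)
    next
      case 2
      then show False
        using z lt by simp
    next
      case 3
      then show False
        using g'(2) z less.prems lt by (metis monotone_onD order.asym)
    qed
  qed
  have "\<forall>y\<in>A. y < x \<longrightarrow> f y = g y"
    using less.IH by blast
  then show ?case
    using not_less[of f g] not_less[of g f] assms(1-4) by fastforce
qed

definition admissible :: "nat \<Rightarrow> nat \<Rightarrow> (nat \<Rightarrow> nat) \<Rightarrow> bool" where
  "admissible m N \<pi> \<longleftrightarrow> \<pi> permutes {1..N} \<and> (\<forall>i\<in>{1..N}. int (\<pi> i) - int i \<in> {-2, -1, int m})"

definition jumps :: "nat \<Rightarrow> nat \<Rightarrow> (nat \<Rightarrow> nat) \<Rightarrow> nat set" where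
  "jumps m N \<pi> = {i\<in>{1..N}. \<pi> i = i + m}"

lemma admissible_cases:
  assumes "admissible m N \<pi>" "i \<in> {1..N}"
  shows "\<pi> i = i + m \<or> \<pi> i + 1 = i \<or> \<pi> i + 2 = i"
proof -
  have "int (\<pi> i) - int i \<in> {-2, -1, int m}"
    using assms unfolding admissible_def by blast
  then show ?thesis
    by auto
qed

lemma admissible_nonjump:
  assumes "admissible m N \<pi>" "i \<in> {1..N} - jumps m N \<pi>"
  shows "\<pi> i + 1 = i \<or> \<pi> i + 2 = i"
  using admissible_cases[of m N \<pi> i] assms by (auto simp: jumps_def)

lemma admissible_strict_mono_on_nonjumps:
  assumes "admissible m N \<pi>"
  shows "strict_mono_on ({1..N} - jumps m N \<pi>) \<pi>"
proof (rule strict_mono_onI)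
  fix r r' assume r: "r \<in> {1..N} - jumps m N \<pi>" "r' \<in> {1..N} - jumps m N \<pi>" "r < r'"
  have "\<pi> r \<noteq> \<pi> r'"
    using r assms permutes_inj[of \<pi> "{1..N}"] by (auto simp: admissible_def inj_def)
  then show "\<pi> r < \<pi> r'"
    using admissible_nonjump[OF assms r(1)] admissible_nonjump[OF assms r(2)] r(3) by linarith
qed

lemma admissible_bij_betw: "admissible m N \<pi> \<Longrightarrow> bij_betw \<pi> {1..N} {1..N}"
  using permutes_imp_bij by (auto simp: admissible_def)

lemma admissible_bij_betw_nonjumps:
  assumes "admissible m N \<pi>"
  shows "bij_betw \<pi> ({1..N} - jumps m N \<pi>) ({1..N} - (\<lambda>i. i + m) ` jumps m N \<pi>)"
proof -
  note bij = admissible_bij_betw[OF assms]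
  have sub: "jumps m N \<pi> \<subseteq> {1..N}"
    by (auto simp: jumps_def)
  have img: "\<pi> ` jumps m N \<pi> = (\<lambda>i. i + m) ` jumps m N \<pi>"
    by (auto simp: jumps_def)
  show ?thesis
  proof (rule bij_betw_DiffI[OF bij bij_betw_subset[OF bij sub img] sub])
    show "(\<lambda>i. i + m) ` jumps m N \<pi> \<subseteq> {1..N}"
      using img sub bij_betw_imp_surj_on[OF bij] by blast
  qed
qed

lemma admissible_eqI:
  assumes \<pi>: "admissible m N \<pi>" and \<sigma>: "admissible m N \<sigma>" and eq: "jumps m N \<pi> = jumps m N \<sigma>"
  shows "\<pi> = \<sigma>"
proof
  fix r
  consider "r \<notin> {1..N}" | "r \<in> jumps m N \<pi>" | "r \<in> {1..N} - jumps m N \<pi>"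
    by blast
  then show "\<pi> r = \<sigma> r"
  proof cases
    case 1
    then show ?thesis
      using \<pi> \<sigma> permutes_not_in by (metis admissible_def)
  next
    case 2
    moreover have "r \<in> jumps m N \<sigma>"
      using 2 eq by simp
    ultimately show ?thesis
      by (simp add: jumps_def)
  next
    case 3
    have "bij_betw \<sigma> ({1..N} - jumps m N \<pi>) ({1..N} - (\<lambda>i. i + m) ` jumps m N \<pi>)"
      using admissible_bij_betw_nonjumps[OF \<sigma>] unfolding eq .
    moreover have "strict_mono_on ({1..N} - jumps m N \<pi>) \<sigma>"
      using admissible_strict_mono_on_nonjumps[OF \<sigma>] unfolding eq .
    ultimately show ?thesis
      using strict_mono_on_bij_betw_eq[OF admissible_bij_betw_nonjumps[OF \<pi>] _
          admissible_strict_mono_on_nonjumps[OF \<pi>] _ 3]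
      by blast
  qed
qed

lemma card_atLeastAtMost_Diff_image_add:
  fixes S :: "nat set"
  assumes "0 \<notin> S"
  shows "card ({1..a} - (\<lambda>i. i + m) ` S) = a - card (S \<inter> {1..a-m})"
proof -
  have "{1..a} \<inter> (\<lambda>i. i + m) ` S = (\<lambda>i. i + m) ` (S \<inter> {1..a-m})"
  proof (intro equalityI subsetI)
    fix c assume "c \<in> {1..a} \<inter> (\<lambda>i. i + m) ` S"
    then obtain i where "i \<in> S" "c = i + m" "c \<le> a"
      by auto
    moreover have "i \<noteq> 0"
      using assms \<open>i \<in> S\<close> by metis
    ultimately show "c \<in> (\<lambda>i. i + m) ` (S \<inter> {1..a-m})"
      by auto
  qed auto
  then have "card ({1..a} \<inter> (\<lambda>i. i + m) ` S) = card (S \<inter> {1..a-m})"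
    by (simp add: card_image)
  then show ?thesis
    by (simp add: card_Diff_subset_Int)
qed

text \<open>Otherwise the non-jumps in {1..x+m+1} would be mapped injectively into a set with one
  element fewer: the values below x+m+1 that are not jump targets.\<close>

lemma admissible_jump_gap:
  assumes \<pi>: "admissible m N \<pi>" and x: "x \<in> jumps m N \<pi>" "x + m + 1 \<le> N"
  shows "\<exists>y\<in>jumps m N \<pi>. x < y \<and> y \<le> x + m + 1"
proof (rule ccontr)
  let ?S = "jumps m N \<pi>" and ?t = "x + m + 1"
  assume "\<not> ?thesis"
  then have S_t: "?S \<inter> {1..?t} = ?S \<inter> {1..x}"
    using x by auto
  have "\<pi> ` ({1..?t} - ?S) \<subseteq> {1..?t-1} - (\<lambda>i. i + m) ` ?S"
  proof
    fix c assume "c \<in> \<pi> ` ({1..?t} - ?S)"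
    then obtain r where r: "r \<in> {1..?t} - ?S" "c = \<pi> r"
      by blast
    then have "r \<in> {1..N} - ?S"
      using x by auto
    then show "c \<in> {1..?t-1} - (\<lambda>i. i + m) ` ?S"
      using r admissible_nonjump[OF \<pi>] bij_betwE[OF admissible_bij_betw_nonjumps[OF \<pi>]]
      by fastforce
  qed
  moreover have "inj_on \<pi> ({1..?t} - ?S)"
    using x bij_betw_imp_inj_on[OF admissible_bij_betw[OF \<pi>]] by (auto intro: inj_on_subset)
  ultimately have "card ({1..?t} - ?S) \<le> card ({1..?t-1} - (\<lambda>i. i + m) ` ?S)"
    by (intro card_inj_on_le) auto
  moreover have "0 \<notin> ?S"
    by (simp add: jumps_def)
  ultimately have "?t - card (?S \<inter> {1..x}) \<le> ?t - 1 - card (?S \<inter> {1..x})"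
    using card_atLeastAtMost_Diff_image_add[of ?S "?t-1" m] S_t
    by (simp add: card_Diff_subset_Int Int_commute)
  moreover have "card (?S \<inter> {1..x}) \<le> x"
    using card_mono[of "{1..x}" "?S \<inter> {1..x}"] by auto
  ultimately show False
    by linarith
qed

text \<open>Otherwise the values in {1..z-2} that are not jump targets, which all come from non-jumps
  in {1..z}, would outnumber these non-jumps.\<close>

lemma admissible_jump_spread:
  assumes \<pi>: "admissible m N \<pi>"
    and xyz: "x \<in> jumps m N \<pi>" "y \<in> jumps m N \<pi>" "z \<in> jumps m N \<pi>" "x < y" "y < z"
  shows "x + m + 2 \<le> z"
proof (rule ccontr)
  let ?S = "jumps m N \<pi>"
  assume "\<not> ?thesis"
  have "z \<le> N"
    using xyz by (simp add: jumps_def)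
  have "{1..z-2} - (\<lambda>i. i + m) ` ?S \<subseteq> \<pi> ` ({1..z} - ?S)"
  proof
    fix c assume c: "c \<in> {1..z-2} - (\<lambda>i. i + m) ` ?S"
    then have "c \<in> {1..N} - (\<lambda>i. i + m) ` ?S"
      using \<open>z \<le> N\<close> by auto
    then obtain r where r: "r \<in> {1..N} - ?S" "\<pi> r = c"
      using bij_betw_imp_surj_on[OF admissible_bij_betw_nonjumps[OF \<pi>]] by (metis imageE)
    then have "r \<le> z"
      using admissible_nonjump[OF \<pi> r(1)] c by auto
    then show "c \<in> \<pi> ` ({1..z} - ?S)"
      using r by auto
  qed
  then have "card ({1..z-2} - (\<lambda>i. i + m) ` ?S) \<le> card ({1..z} - ?S)"
    using surj_card_le[of "{1..z} - ?S"] by blast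
  moreover have "0 \<notin> ?S"
    by (simp add: jumps_def)
  ultimately have "z - 2 - card (?S \<inter> {1..z-2-m}) \<le> z - card (?S \<inter> {1..z})"
    using card_atLeastAtMost_Diff_image_add[of ?S "z-2" m]
    by (simp add: card_Diff_subset_Int Int_commute)
  moreover have "card (?S \<inter> {1..z-2-m}) + 3 \<le> card (?S \<inter> {1..z})"
  proof -
    let ?T = "?S \<inter> {1..z-2-m}"
    have "x \<notin> ?T" "y \<notin> ?T" "z \<notin> ?T"
      using \<open>\<not> x + m + 2 \<le> z\<close> xyz(4,5) by auto
    then have "card (insert x (insert y (insert z ?T))) = card ?T + 3"
      using xyz(4,5) by simp
    moreover have "insert x (insert y (insert z ?T)) \<subseteq> ?S \<inter> {1..z}"
      using xyz by (auto simp: jumps_def)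
    ultimately show ?thesis
      using card_mono[of "?S \<inter> {1..z}" "insert x (insert y (insert z ?T))"] by simp
  qed
  moreover have "card (?S \<inter> {1..z}) \<le> z"
    using card_mono[of "{1..z}" "?S \<inter> {1..z}"] by auto
  ultimately show False
    by linarith
qed

lemma jump_set_jumps:
  assumes \<pi>: "admissible m (j+m+1) \<pi>"
  shows "jump_set m j (jumps m (j+m+1) \<pi>)"
proof -
  let ?N = "j+m+1" and ?S = "jumps m (j+m+1) \<pi>"
  note bij = admissible_bij_betw[OF \<pi>]
  have "?S \<subseteq> {1..j+1}"
  proof
    fix i assume "i \<in> ?S"
    then have "i \<in> {1..?N}" "\<pi> i = i + m"
      by (auto simp: jumps_def)
    then show "i \<in> {1..j+1}"
      using bij_betwE[OF bij] by force
  qed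
  moreover have "1 \<in> ?S"
  proof -
    have "\<pi> 1 \<in> {1..?N}"
      using bij_betwE[OF bij] by simp
    then show ?thesis
      using admissible_cases[OF \<pi>, of 1] by (auto simp: jumps_def)
  qed
  moreover have "j+1 \<in> ?S"
  proof -
    obtain i where i: "i \<in> {1..?N}" "\<pi> i = ?N"
      using bij_betw_imp_surj_on[OF bij] by (metis atLeastAtMost_iff imageE le_add2 order.refl)
    then have "i = j+1"
      using admissible_cases[OF \<pi> i(1)] by auto
    then show ?thesis
      using i by (simp add: jumps_def)
  qed
  ultimately show ?thesis
    using admissible_jump_gap[OF \<pi>] admissible_jump_spread[OF \<pi>]
    unfolding jump_set_def by fastforce
qed

text \<open>Counting non-jumps below r against non-targets below its image shows that a non-jump r
  moves down by d exactly when [r-d-m+1, r) contains d jumps; for jump sets this yields the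
  case distinction below.\<close>

definition two_jumps_before :: "nat \<Rightarrow> nat set \<Rightarrow> nat \<Rightarrow> bool" where
  "two_jumps_before m S r \<longleftrightarrow> (\<exists>x\<in>S. \<exists>y\<in>S. r \<le> x + m + 1 \<and> x < y \<and> y < r)"

definition perm_of_jumps :: "nat \<Rightarrow> nat \<Rightarrow> nat set \<Rightarrow> nat \<Rightarrow> nat" where
  "perm_of_jumps m N S r =
     (if r \<in> S then r + m
      else if r \<in> {1..N} then r - (if two_jumps_before m S r then 2 else 1)
      else r)"

lemma perm_of_jumps_nonjump:
  assumes S: "jump_set m j S" and r: "r \<in> {1..j+m+1} - S"
  shows "1 \<le> perm_of_jumps m (j+m+1) S r"
    and "if two_jumps_before m S r then perm_of_jumps m (j+m+1) S r + 2 = r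
         else perm_of_jumps m (j+m+1) S r + 1 = r"
proof -
  have "1 \<in> S" "\<forall>x\<in>S. 1 \<le> x"
    using S by (auto simp: jump_set_def)
  have "r \<noteq> 1"
    using r \<open>1 \<in> S\<close> by auto
  then have "2 \<le> r"
    using r by auto
  moreover have "3 \<le> r" if "two_jumps_before m S r"
    using that \<open>\<forall>x\<in>S. 1 \<le> x\<close> by (fastforce simp: two_jumps_before_def)
  ultimately show "1 \<le> perm_of_jumps m (j+m+1) S r"
    and "if two_jumps_before m S r then perm_of_jumps m (j+m+1) S r + 2 = r
         else perm_of_jumps m (j+m+1) S r + 1 = r"
    using r by (cases "two_jumps_before m S r"; simp add: perm_of_jumps_def)+
qed

lemma perm_of_jumps_nonjumps_neq:
  assumes S: "jump_set m j S" and r: "r \<in> {1..j+m+1} - S" "r' \<in> {1..j+m+1} - S" "r < r'"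
  shows "perm_of_jumps m (j+m+1) S r \<noteq> perm_of_jumps m (j+m+1) S r'"
proof
  assume "perm_of_jumps m (j+m+1) S r = perm_of_jumps m (j+m+1) S r'"
  then have "r' = r+1" "two_jumps_before m S r'" "\<not> two_jumps_before m S r"
    using perm_of_jumps_nonjump(2)[OF S r(1)] perm_of_jumps_nonjump(2)[OF S r(2)] r(3)
    by (auto split: if_splits)
  then obtain x y where xy: "x \<in> S" "y \<in> S" "r \<le> x+m" "x < y" "y \<le> r"
    unfolding two_jumps_before_def by auto
  moreover have "y \<noteq> r"
    using r(1) xy(2) by auto
  ultimately have "two_jumps_before m S r"
    unfolding two_jumps_before_def by force
  then show False
    using \<open>\<not> two_jumps_before m S r\<close> by contradiction
qed

lemma perm_of_jumps_jump_neq_nonjump: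
  assumes S: "jump_set m j S" and r: "r \<in> S" "r' \<in> {1..j+m+1} - S"
  shows "perm_of_jumps m (j+m+1) S r \<noteq> perm_of_jumps m (j+m+1) S r'"
proof
  let ?\<psi> = "perm_of_jumps m (j+m+1) S"
  assume eq: "?\<psi> r = ?\<psi> r'"
  have gap: "\<forall>x\<in>S. x \<le> j \<longrightarrow> (\<exists>y\<in>S. x < y \<and> y \<le> x+m+1)"
    and spread: "\<forall>x\<in>S. \<forall>y\<in>S. \<forall>z\<in>S. x < y \<longrightarrow> y < z \<longrightarrow> x+m+2 \<le> z"
    using S by (auto simp: jump_set_def)
  have "?\<psi> r = r + m"
    using r(1) by (simp add: perm_of_jumps_def)
  show False
  proof (cases "two_jumps_before m S r'")
    case False
    then have "r' = r+m+1"
      using perm_of_jumps_nonjump(2)[OF S r(2)] eq \<open>?\<psi> r = r + m\<close> by simp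
    then obtain y where "y \<in> S" "r < y" "y \<le> r+m+1"
      using gap r by auto
    then show False
      using False r \<open>r' = r+m+1\<close> by (fastforce simp: two_jumps_before_def)
  next
    case True
    then have "r' = r+m+2"
      using perm_of_jumps_nonjump(2)[OF S r(2)] eq \<open>?\<psi> r = r + m\<close> by simp
    then show False
      using True spread r(1) by (fastforce simp: two_jumps_before_def)
  qed
qed

lemma inj_on_perm_of_jumps:
  assumes S: "jump_set m j S"
  shows "inj_on (perm_of_jumps m (j+m+1) S) {1..j+m+1}"
proof (rule inj_onI)
  let ?\<psi> = "perm_of_jumps m (j+m+1) S"
  fix r r' assume r: "r \<in> {1..j+m+1}" "r' \<in> {1..j+m+1}" and eq: "?\<psi> r = ?\<psi> r'"
  show "r = r'"
  proof (rule ccontr)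
    assume "r \<noteq> r'"
    consider "r \<in> S" "r' \<in> S" | "r \<in> S" "r' \<notin> S" | "r \<notin> S" "r' \<in> S" | "r \<notin> S" "r' \<notin> S"
      by blast
    then show False
    proof cases
      case 1
      then show False
        using eq \<open>r \<noteq> r'\<close> by (simp add: perm_of_jumps_def)
    next
      case 2
      then show False
        using perm_of_jumps_jump_neq_nonjump[OF S, of r r'] r eq by auto
    next
      case 3
      then show False
        using perm_of_jumps_jump_neq_nonjump[OF S, of r' r] r eq by auto
    next
      case 4
      then show False
        using perm_of_jumps_nonjumps_neq[OF S, of r r'] perm_of_jumps_nonjumps_neq[OF S, of r' r]
          r eq \<open>r \<noteq> r'\<close>
        by (metis DiffI linorder_neqE_nat)
    qed
  qed
qed

lemma admissible_perm_of_jumps: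
  assumes S: "jump_set m j S"
  shows "admissible m (j+m+1) (perm_of_jumps m (j+m+1) S)"
proof -
  let ?N = "j+m+1" and ?\<psi> = "perm_of_jumps m (j+m+1) S"
  have sub: "S \<subseteq> {1..j+1}"
    using S by (simp add: jump_set_def)
  have "?\<psi> ` {1..?N} \<subseteq> {1..?N}"
  proof
    fix c assume "c \<in> ?\<psi> ` {1..?N}"
    then obtain r where r: "r \<in> {1..?N}" "c = ?\<psi> r"
      by blast
    show "c \<in> {1..?N}"
    proof (cases "r \<in> S")
      case True
      then show ?thesis
        using r sub by (auto simp: perm_of_jumps_def)
    next
      case False
      then show ?thesis
        using r perm_of_jumps_nonjump[OF S, of r] by (auto split: if_splits)
    qed
  qed
  then have "bij_betw ?\<psi> {1..?N} {1..?N}"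
    using inj_on_perm_of_jumps[OF S] endo_inj_surj[of "{1..?N}" ?\<psi>] by (simp add: bij_betw_def)
  moreover have "?\<psi> r = r" if "r \<notin> {1..?N}" for r
    using that sub by (auto simp: perm_of_jumps_def)
  ultimately have "?\<psi> permutes {1..?N}"
    by (intro bij_imp_permutes) auto
  moreover have "int (?\<psi> i) - int i \<in> {-2, -1, int m}" if i: "i \<in> {1..?N}" for i
  proof (cases "i \<in> S")
    case True
    then show ?thesis
      by (simp add: perm_of_jumps_def)
  next
    case False
    then show ?thesis
      using i perm_of_jumps_nonjump(2)[OF S, of i] by (auto split: if_splits)
  qed
  ultimately show ?thesis
    by (simp add: admissible_def)
qed

lemma jumps_perm_of_jumps:
  assumes S: "jump_set m j S"
  shows "jumps m (j+m+1) (perm_of_jumps m (j+m+1) S) = S"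
proof -
  have "r \<in> S" if r: "r \<in> {1..j+m+1}" "perm_of_jumps m (j+m+1) S r = r + m" for r
  proof (rule ccontr)
    assume "r \<notin> S"
    then show False
      using perm_of_jumps_nonjump(2)[OF S, of r] r by (simp split: if_splits)
  qed
  moreover have "S \<subseteq> {1..j+1}"
    using S by (simp add: jump_set_def)
  ultimately show ?thesis
    by (auto simp: jumps_def perm_of_jumps_def)
qed

lemma perm_count_eq_card_jump_sets:
  "perm_count {-2, -1, int m} (j+m+1) = card (jump_sets m j 1)"
proof -
  let ?N = "j+m+1"
  have "bij_betw (jumps m ?N) {\<pi>. admissible m ?N \<pi>} {S. jump_set m j S}"
  proof (rule bij_betwI')
    show "jumps m ?N \<pi> = jumps m ?N \<sigma> \<longleftrightarrow> \<pi> = \<sigma>"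
      if "\<pi> \<in> {\<pi>. admissible m ?N \<pi>}" "\<sigma> \<in> {\<pi>. admissible m ?N \<pi>}" for \<pi> \<sigma>
      using that admissible_eqI by blast
    show "jumps m ?N \<pi> \<in> {S. jump_set m j S}" if "\<pi> \<in> {\<pi>. admissible m ?N \<pi>}" for \<pi>
      using that jump_set_jumps by blast
    show "\<exists>\<pi>\<in>{\<pi>. admissible m ?N \<pi>}. S = jumps m ?N \<pi>" if "S \<in> {S. jump_set m j S}" for S
      using that admissible_perm_of_jumps jumps_perm_of_jumps by fastforce
  qed
  then show ?thesis
    unfolding perm_count_def jump_sets_1 admissible_def[symmetric] by (rule bij_betw_same_card)
qed

lemma perm_count_convolution:
  fixes k m :: nat
  shows "(\<Sum>i=0..k. perm_count {-2, -1, int m} (k+m+1-i) * s_seq 1 (m+2) i ^ 2)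
    = s_seq 1 (m+2) k * s_seq 1 (m+2) (k+m+1)"
proof -
  have "perm_count {-2, -1, int m} (k+m+1-i) = card (jump_sets m (k-i) 1)" if "i \<le> k" for i
  proof -
    have "k+m+1-i = (k-i)+m+1"
      using that by simp
    then show ?thesis
      using perm_count_eq_card_jump_sets[of m "k-i"] by simp
  qed
  then have "(\<Sum>i=0..k. perm_count {-2, -1, int m} (k+m+1-i) * s_seq 1 (m+2) i ^ 2)
      = (\<Sum>j=0..k. card (jump_sets m j 1) * s_seq 1 (m+2) (k-j) ^ 2)"
    by (intro sum.reindex_bij_witness[where i = "\<lambda>j. k - j" and j = "\<lambda>i. k - i"]) auto
  also have "\<dots> = s_seq 1 (m+2) k * s_seq 1 (m+2) (k+m+1)"
    using jump_sets_convolution[of 1 m k] by simp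
  finally show ?thesis .
qed

theorem mainTheorem7:
  fixes m n :: nat
  shows "int (s_seq 1 (m+2) (n+m+2))^2 - 1 =
    (\<Sum>k=0..n. int (s_seq 1 (m+2) k)^2
       + 2 * (\<Sum>i=0..k. int (perm_count {-2, -1, int m} (k+m+1-i)) * int (s_seq 1 (m+2) i)^2))"
proof -
  let ?s = "\<lambda>k. int (s_seq 1 (m+2) k)"
  have step: "?s (Suc k + m + 1)^2 - ?s (k+m+1)^2
      = ?s k^2 + 2 * (\<Sum>i=0..k. int (perm_count {-2, -1, int m} (k+m+1-i)) * ?s i^2)" for k
  proof -
    have "?s (Suc k + m + 1) = ?s (k+m+1) + ?s k"
      using s_seq_1_rec[of "m+2" "k+m+2"] by simp
    moreover have "(\<Sum>i=0..k. int (perm_count {-2, -1, int m} (k+m+1-i)) * ?s i^2) = ?s k * ?s (k+m+1)"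
      using arg_cong[OF perm_count_convolution[where k = k and m = m], of int] by simp
    ultimately show ?thesis
      by (simp add: power2_eq_square algebra_simps)
  qed
  have "?s (m+1) = 1"
    using s_seq_1_below[of "m+1" "m+2"] by simp
  then have "?s (n+m+2)^2 - 1 = (\<Sum>k=0..n. ?s (Suc k + m + 1)^2 - ?s (k+m+1)^2)"
    using sum_Suc_diff[of 0 n "\<lambda>k. ?s (k+m+1)^2"] by simp
  then show ?thesis
    by (simp only: step)
qed

end
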